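(* Let $\ell\in\{0,1,2,\ldots\}$. (1) For $q>2$, $$\tilde\gamma_\ell(q)=\frac{\log^{\ell+1}(q-1)-\log^{\ell+1}(q-2)}{2(\ell+1)}-\ell!\sum_{k=1}^\infty\frac{(-1)^k2^k}{(k+1)!}\sum_{j=0}^{\ell}\frac{(-1)^j}{j!}\,s(k+1,\ell-j+1)\,\zeta_E^{(j)}(k+1,q).$$ (2) For $q>1$, $$\tilde\gamma_\ell(q)=\frac{\log^{\ell+1}q-\log^{\ell+1}(q-1)}{2(\ell+1)}-\ell!\sum_{k=1}^\infty\frac{1}{(2k+1)!}\sum_{j=0}^{\ell}\frac{(-1)^j}{j!}\,s(2k+1,\ell-j+1)\,\zeta_E^{(j)}(2k+1,q).$$
   Context: For $q>0$, $\zeta_E(z,q)=\sum_{n=0}^\infty (-1)^n (n+q)^{-z}$ for $\mathrm{Re}(z)>0$, extended by analytic continuation to an entire function of $z$; $\zeta_E^{(m)}(z,q)$ denotes $\frac{\partial^m}{\partial z^m}\zeta_E(z,q)$. The modified Stieltjes constants $\tilde\gamma_k(q)$ are defined by the Taylor expansion $\zeta_E(z,q)=\sum_{k=0}^\infty\frac{(-1)^k\tilde\gamma_k(q)}{k!}(z-1)^k$. $s(n,k)$ are the (signed) Stirling numbers of the first kind: $x(x-1)\cdots(x-n+1)=\sum_{k=0}^n s(n,k)x^k$ (with $s(n,k)=0$ for $k>n$). *)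

theory Defs
  imports "HOL-Complex_Analysis.Complex_Analysis" "HOL-Combinatorics.Stirling"
begin

definition zetaE :: "complex \<Rightarrow> real \<Rightarrow> complex" where
  "zetaE z q = (THE f. f holomorphic_on UNIV \<and>
      (\<forall>w. Re w > 0 \<longrightarrow> (\<lambda>n. (-1) ^ n * (complex_of_real (real n + q)) powr (- w)) sums f w)) z"

definition zetaE_deriv :: "nat \<Rightarrow> complex \<Rightarrow> real \<Rightarrow> complex" where
  "zetaE_deriv m z q = (deriv ^^ m) (\<lambda>w. zetaE w q) z"

definition mod_stieltjes :: "nat \<Rightarrow> real \<Rightarrow> complex" where
  "mod_stieltjes k q = (THE c :: nat \<Rightarrow> complex. \<forall>z.
      (\<lambda>k. (-1) ^ k * c k / fact k * (z - 1) ^ k) sums zetaE z q) k"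

definition stirling1s :: "nat \<Rightarrow> nat \<Rightarrow> int" where
  "stirling1s n k = (-1) ^ (n - k) * int (stirling n k)"

end

theory Submission
  imports Defs
begin

text \<open>The alternating series is continued to all s by iterating Euler's transformation
  sum (-1)^n f(n) = (f(0) + sum (-1)^n (f(n) - f(n+1))) / 2.
  Expanding (n + q + a) powr (1 - s) binomially in powers of a and summing over n gives,
  for a = -2 and for a = 1 and a = -1 (whose difference is taken), identities near s = 1 of the form
  sum_k w_k ((1 - s) gchoose (k + 2)) zetaE (s + k + 1) q = (alpha powr (1 - s) - beta powr (1 - s)) / 2
  - (1 - s) zetaE s q, because the remaining alternating series telescopes.
  Since (1 - s) gchoose m = sum_i s(m, i) (1 - s)^i / m!, differentiating l + 1 times at s = 1
  produces the Stirling numbers, and the term (1 - s) zetaE s q produces the Stieltjes constant.\<close>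

section \<open>Analytic continuation of zetaE\<close>

definition shifted_powr :: "real \<Rightarrow> complex \<Rightarrow> complex \<Rightarrow> complex" where
  "shifted_powr q s z = (z + of_real q) powr (- s)"

fun shift_diff :: "nat \<Rightarrow> (complex \<Rightarrow> complex) \<Rightarrow> complex \<Rightarrow> complex" where
  "shift_diff 0 f = f"
| "shift_diff (Suc m) f = (\<lambda>z. shift_diff m f z - shift_diff m f (z + 1))"

lemma shift_diff_cmult: "shift_diff m (\<lambda>z. c * f z) z = c * shift_diff m f z"
  by (induction m arbitrary: z) (simp_all add: algebra_simps)

lemma shift_diff_has_field_derivative:
  assumes "\<And>z. z \<in> U \<Longrightarrow> (f has_field_derivative f' z) (at z)"
    and "\<And>z. z \<in> U \<Longrightarrow> z + 1 \<in> U" and "z \<in> U"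
  shows "(shift_diff m f has_field_derivative shift_diff m f' z) (at z)"
  using assms(3)
proof (induction m arbitrary: z)
  case (Suc m)
  have "(shift_diff m f has_field_derivative shift_diff m f' (z + 1)) (at (z + 1))"
    using Suc assms(2) by blast
  then have "((\<lambda>z. shift_diff m f (z + 1)) has_field_derivative shift_diff m f' (z + 1)) (at z)"
    using DERIV_shift by blast
  moreover have "(shift_diff m f has_field_derivative shift_diff m f' z) (at z)"
    using Suc by blast
  ultimately show ?case
    using DERIV_diff by fastforce
qed (use assms(1) in simp)

lemma shifted_powr_has_field_derivative:
  assumes "z + of_real q \<notin> \<real>\<^sub>\<le>\<^sub>0"
  shows "(shifted_powr q s has_field_derivative - s * shifted_powr q (s + 1) z) (at z)"
proof -
  have powr: "((\<lambda>w. w powr (- s)) has_field_derivative - s * (z + of_real q) powr (- s - 1))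
          (at (z + of_real q))"
    by (rule has_field_derivative_powr[OF assms])
  have "((\<lambda>w. (w + of_real q) powr (- s)) has_field_derivative
               - s * (z + of_real q) powr (- s - 1)) (at z)"
    using DERIV_shift[THEN iffD1, OF powr] by simp
  moreover have "- s - 1 = - (s + 1)"
    by simp
  ultimately show ?thesis
    unfolding shifted_powr_def by (simp only: mult_minus_left)
qed

lemma norm_shifted_powr:
  "q > 0 \<Longrightarrow> x \<ge> 0 \<Longrightarrow> norm (shifted_powr q s (of_real x)) = (x + q) powr (- Re s)"
  unfolding shifted_powr_def by (subst norm_powr_real_powr) auto

text \<open>By the mean value theorem on the segment from x to x + 1, each further difference costs
  one derivative, i.e. one further Pochhammer factor.\<close>
lemma norm_shift_diff_shifted_powr_le:
  assumes "q > 0" "x \<ge> 0" "Re s + m > 0"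
  shows "norm (shift_diff m (shifted_powr q s) (of_real x))
           \<le> norm (pochhammer s m) * (x + q) powr (- (Re s + m))"
  using assms(2,3)
proof (induction m arbitrary: s x)
  case 0
  then show ?case using norm_shifted_powr[OF assms(1)] by simp
next
  case (Suc m)
  define U where "U = {z. Im z = 0 \<and> Re z \<ge> 0}"
  define S where "S = closed_segment (complex_of_real x) (of_real x + 1)"
  define B where "B = norm s * norm (pochhammer (s + 1) m) * (x + q) powr (- (Re s + 1 + m))"
  have "(shifted_powr q s has_field_derivative - s * shifted_powr q (s + 1) z) (at z)" if "z \<in> U" for z
    using that assms(1)
    by (intro shifted_powr_has_field_derivative) (auto simp: U_def nonpos_Reals_def complex_eq_iff)
  then have der: "(shift_diff m (shifted_powr q s) has_field_derivative
                    shift_diff m (\<lambda>z. - s * shifted_powr q (s + 1) z) z) (at z)" if "z \<in> U" for z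
    by (rule shift_diff_has_field_derivative[where U = U]) (use that in \<open>auto simp: U_def\<close>)
  have SU: "S \<subseteq> U"
    by (auto simp: S_def U_def in_segment Suc.prems)
  have bnd: "norm (shift_diff m (\<lambda>z. - s * shifted_powr q (s + 1) z) z) \<le> B" if "z \<in> S" for z
  proof -
    obtain u where u: "0 \<le> u" "u \<le> 1" "z = of_real (x + u)"
      using \<open>z \<in> S\<close> by (auto simp: S_def in_segment scaleR_conv_of_real algebra_simps)
    have "norm (shift_diff m (\<lambda>z. - s * shifted_powr q (s + 1) z) z)
            = norm s * norm (shift_diff m (shifted_powr q (s + 1)) (of_real (x + u)))"
      by (simp only: shift_diff_cmult[of m "- s"] norm_mult norm_minus_cancel u(3))
    also have "\<dots> \<le> norm s * (norm (pochhammer (s + 1) m) * (x + u + q) powr (- (Re (s + 1) + m)))"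
      by (intro mult_left_mono Suc.IH) (use Suc.prems u in auto)
    also have "\<dots> \<le> B"
      unfolding B_def by (simp add: mult.assoc, intro mult_left_mono powr_mono2')
                         (use Suc.prems u assms in \<open>auto simp: add_ac\<close>)
    finally show ?thesis .
  qed
  have "norm (shift_diff m (shifted_powr q s) (of_real x) - shift_diff m (shifted_powr q s) (of_real x + 1))
          \<le> B * norm (of_real x - (of_real x + 1 :: complex))"
    by (rule field_differentiable_bound[where S = S])
       (use der SU bnd in \<open>auto simp: S_def intro: has_field_derivative_at_within\<close>)
  then show ?case
    by (simp add: B_def pochhammer_rec norm_mult add_ac)
qed

lemma summable_real_powr_shift:
  assumes "q > 0" "p > 1"
  shows "summable (\<lambda>n. (real n + q) powr (- p))"
proof (rule summable_comparison_test'[where N = 1])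
  show "summable (\<lambda>n. real n powr (- p))"
    using assms by (subst summable_real_powr_iff) auto
qed (use assms in \<open>auto intro!: powr_mono2'\<close>)

lemma real_powr_shift_tendsto_0:
  assumes "q > 0" "p > 0"
  shows "(\<lambda>n. (real n + q) powr (- p)) \<longlonglongrightarrow> 0"
proof (rule tendsto_neg_powr)
  show "filterlim (\<lambda>n. real n + q) at_top sequentially"
    using filterlim_tendsto_add_at_top[OF tendsto_const[of q] filterlim_real_sequentially]
    by (simp add: add.commute)
qed (use assms in auto)

lemma summable_norm_shift_diff_shifted_powr:
  assumes "q > 0" "Re s + m > 1"
  shows "summable (\<lambda>n. norm ((-1) ^ n * shift_diff m (shifted_powr q s) (of_nat n)))"
proof (rule summable_comparison_test'[where N = 0])
  show "summable (\<lambda>n. norm (pochhammer s m) * (real n + q) powr (- (Re s + m)))"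
    by (intro summable_mult summable_real_powr_shift) (use assms in auto)
qed (use norm_shift_diff_shifted_powr_le[OF assms(1), of "real _"] assms in \<open>simp add: norm_mult norm_power\<close>)

lemma shift_diff_shifted_powr_tendsto_0:
  assumes "q > 0" "Re s + m > 0"
  shows "(\<lambda>n. shift_diff m (shifted_powr q s) (of_nat n)) \<longlonglongrightarrow> 0"
proof (rule Lim_null_comparison)
  show "\<forall>\<^sub>F n in sequentially. norm (shift_diff m (shifted_powr q s) (of_nat n))
          \<le> norm (pochhammer s m) * (real n + q) powr (- (Re s + m))"
    using norm_shift_diff_shifted_powr_le[OF assms(1), of "real _"] assms by (intro always_eventually allI) simp
  show "(\<lambda>n. norm (pochhammer s m) * (real n + q) powr (- (Re s + m))) \<longlonglongrightarrow> 0"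
    using tendsto_mult_left[OF real_powr_shift_tendsto_0[OF assms(1)]] assms by fastforce
qed

lemma alternating_sums_by_differences:
  fixes g :: "nat \<Rightarrow> 'a :: real_normed_field"
  assumes "g \<longlonglongrightarrow> 0" and "(\<lambda>n. (-1) ^ n * (g n - g (Suc n))) sums T"
  shows "(\<lambda>n. (-1) ^ n * g n) sums ((g 0 + T) / 2)"
proof -
  have "(\<lambda>n. (-1) ^ n * g n) \<longlonglongrightarrow> 0"
    by (rule tendsto_norm_zero_cancel) (use tendsto_norm_zero[OF assms(1)] in \<open>simp add: norm_mult norm_power\<close>)
  then have "(\<lambda>n. (-1) ^ n * g n - (-1) ^ Suc n * g (Suc n)) sums g 0"
    using telescope_sums' by fastforce
  from sums_add[OF this assms(2)] have "(\<lambda>n. 2 * ((-1) ^ n * g n)) sums (g 0 + T)"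
    by (simp add: algebra_simps)
  from sums_divide[OF this, of 2] show ?thesis
    by simp
qed

lemma sums_shift_diff_shifted_powr:
  assumes "q > 0" "Re s + m > 0"
  shows "(\<lambda>n. (-1) ^ n * shift_diff m (shifted_powr q s) (of_nat n)) sums
           ((shift_diff m (shifted_powr q s) 0
             + (\<Sum>n. (-1) ^ n * shift_diff (Suc m) (shifted_powr q s) (of_nat n))) / 2)"
proof -
  have "summable (\<lambda>n. (-1) ^ n * shift_diff (Suc m) (shifted_powr q s) (of_nat n))"
    by (rule summable_norm_cancel, rule summable_norm_shift_diff_shifted_powr) (use assms in auto)
  then have "(\<lambda>n. (-1) ^ n * (shift_diff m (shifted_powr q s) (of_nat n)
                 - shift_diff m (shifted_powr q s) (of_nat (Suc n))))
               sums (\<Sum>n. (-1) ^ n * shift_diff (Suc m) (shifted_powr q s) (of_nat n))"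
    by (simp add: summable_sums add_ac)
  from alternating_sums_by_differences[OF shift_diff_shifted_powr_tendsto_0[OF assms] this]
  show ?thesis
    by simp
qed

text \<open>The m-th Euler transform of the alternating series; it converges absolutely for
  Re s > 1 - m and does not depend on m.\<close>
definition euler_transform :: "real \<Rightarrow> nat \<Rightarrow> complex \<Rightarrow> complex" where
  "euler_transform q m s = (\<Sum>j<m. shift_diff j (shifted_powr q s) 0 / 2 ^ Suc j)
      + (\<Sum>n. (-1) ^ n * shift_diff m (shifted_powr q s) (of_nat n)) / 2 ^ m"

lemma euler_transform_Suc:
  assumes "q > 0" "Re s + m > 0"
  shows "euler_transform q (Suc m) s = euler_transform q m s"
proof -
  have "(\<Sum>n. (-1) ^ n * shift_diff m (shifted_powr q s) (of_nat n))
          = shift_diff m (shifted_powr q s) 0 / 2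
            + (\<Sum>n. (-1) ^ n * shift_diff (Suc m) (shifted_powr q s) (of_nat n)) / 2"
    using sums_unique[OF sums_shift_diff_shifted_powr[OF assms]]
    by (simp add: add_divide_distrib del: shift_diff.simps)
  then show ?thesis
    unfolding euler_transform_def sum.lessThan_Suc
    by (simp add: add_divide_distrib divide_divide_eq_left del: shift_diff.simps)
qed

lemma euler_transform_mono_eq:
  assumes "q > 0" "Re s + m > 0" "m \<le> m'"
  shows "euler_transform q m' s = euler_transform q m s"
  using assms(3)
proof (induction m' rule: dec_induct)
  case (step k)
  then show ?case using euler_transform_Suc[OF assms(1), of s k] assms(2) by simp
qed simp

lemma euler_transform_eq:
  assumes "q > 0" "Re s + m > 0" "Re s + m' > 0"
  shows "euler_transform q m s = euler_transform q m' s"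
proof (cases "m \<le> m'")
  case True
  from euler_transform_mono_eq[OF assms(1,2) True] show ?thesis
    by (rule sym)
next
  case False
  then show ?thesis
    using euler_transform_mono_eq[OF assms(1,3), of m] by simp
qed

lemma sums_euler_transform:
  assumes "q > 0" "Re s > 0"
  shows "(\<lambda>n. (-1) ^ n * complex_of_real (real n + q) powr (- s)) sums euler_transform q 1 s"
proof -
  have eq: "euler_transform q 1 s = (shift_diff 0 (shifted_powr q s) 0
              + (\<Sum>n. (-1) ^ n * shift_diff (Suc 0) (shifted_powr q s) (of_nat n))) / 2"
    by (simp add: euler_transform_def add_divide_distrib del: shift_diff.simps)
  have "(\<lambda>n. (-1) ^ n * shift_diff 0 (shifted_powr q s) (of_nat n)) sums euler_transform q 1 s"
    unfolding eq using sums_shift_diff_shifted_powr[OF assms(1), of s 0] assms(2) by simp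
  then show ?thesis
    by (simp add: shifted_powr_def)
qed

lemma holomorphic_shift_diff_shifted_powr: "(\<lambda>s. shift_diff j (shifted_powr q s) z) holomorphic_on A"
  by (induction j arbitrary: z) (auto simp: shifted_powr_def intro!: holomorphic_intros)

lemma norm_pochhammer_le: "norm (pochhammer (s :: complex) m) \<le> (norm s + m) ^ m"
proof (induction m)
  case (Suc m)
  have "norm (pochhammer s (Suc m)) = norm (s + of_nat m) * norm (pochhammer s m)"
    by (simp add: pochhammer_rec' norm_mult)
  also have "\<dots> \<le> (norm s + m) * (norm s + m) ^ m"
    by (intro mult_mono Suc.IH) (auto intro: order.trans[OF norm_triangle_ineq])
  also have "\<dots> \<le> (norm s + Suc m) ^ Suc m"
    by (simp, intro mult_mono power_mono) auto
  finally show ?case .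
qed simp

lemma norm_shift_diff_shifted_powr_le_uniform:
  assumes "q > 0" "n \<ge> 1" "norm s \<le> R" "Re s \<ge> \<sigma>" "\<sigma> + m > 0"
  shows "norm (shift_diff m (shifted_powr q s) (of_nat n)) \<le> (R + m) ^ m * (real n + q) powr (- (\<sigma> + m))"
proof -
  have "norm (shift_diff m (shifted_powr q s) (of_nat n)) \<le> norm (pochhammer s m) * (real n + q) powr (- (Re s + m))"
    using norm_shift_diff_shifted_powr_le[OF assms(1), of "real n" s m] assms by simp
  also have "\<dots> \<le> (R + m) ^ m * (real n + q) powr (- (\<sigma> + m))"
  proof (rule mult_mono)
    show "norm (pochhammer s m) \<le> (R + m) ^ m"
      using norm_pochhammer_le[of s m] power_mono[of "norm s + m" "R + m" m] assms(3) by simp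
    show "(real n + q) powr (- (Re s + m)) \<le> (real n + q) powr (- (\<sigma> + m))"
      using assms by (intro powr_mono) auto
  qed (use order_trans[OF norm_ge_zero assms(3)] in auto)
  finally show ?thesis .
qed

lemma holomorphic_euler_transform:
  assumes "q > 0"
  shows "euler_transform q m holomorphic_on {s. Re s > 1 - real m}"
proof -
  define H where "H = {s. Re s > 1 - real m}"
  define f where "f = (\<lambda>n s. (-1) ^ n * shift_diff m (shifted_powr q s) (of_nat n))"
  have "(\<lambda>s. \<Sum>n. f n s) holomorphic_on H"
  proof (rule holomorphic_uniform_sequence)
    fix s0 assume "s0 \<in> H"
    define d where "d = (Re s0 + m - 1) / 2"
    define C where "C = (norm s0 + d + m) ^ m"
    have d: "d > 0" "Re s0 - d + m > 1"
      using \<open>s0 \<in> H\<close> by (auto simp: H_def d_def field_simps)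
    have bound: "norm (f n s) \<le> C * (real n + q) powr (- (Re s0 - d + m))"
      if "n \<ge> 1" "s \<in> cball s0 d" for n s
    proof -
      have "norm s \<le> norm s0 + d" "Re s \<ge> Re s0 - d"
        using that norm_triangle_ineq2[of s s0] abs_Re_le_cmod[of "s0 - s"]
        by (auto simp: dist_norm norm_minus_commute)
      from norm_shift_diff_shifted_powr_le_uniform[OF assms that(1) this] d show ?thesis
        by (simp add: f_def C_def norm_mult norm_power)
    qed
    have "\<forall>\<^sub>F n in sequentially. \<forall>s\<in>cball s0 d. norm (f n s) \<le> C * (real n + q) powr (- (Re s0 - d + m))"
      using eventually_ge_at_top[of 1] by eventually_elim (use bound in auto)
    moreover have "summable (\<lambda>n. C * (real n + q) powr (- (Re s0 - d + m)))"
      using d assms by (intro summable_mult summable_real_powr_shift) auto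
    ultimately have "uniform_limit (cball s0 d) (\<lambda>N s. \<Sum>n<N. f n s) (\<lambda>s. \<Sum>n. f n s) sequentially"
      by (rule Weierstrass_m_test_ev)
    moreover have "cball s0 d \<subseteq> H"
    proof
      fix s assume "s \<in> cball s0 d"
      then have "Re s \<ge> Re s0 - d"
        using abs_Re_le_cmod[of "s0 - s"] by (auto simp: dist_norm)
      then show "s \<in> H"
        using d by (simp add: H_def)
    qed
    ultimately show "\<exists>d>0. cball s0 d \<subseteq> H \<and>
                       uniform_limit (cball s0 d) (\<lambda>N s. \<Sum>n<N. f n s) (\<lambda>s. \<Sum>n. f n s) sequentially"
      using d by blast
  qed (auto simp: H_def f_def open_halfspace_Re_gt intro!: holomorphic_intros
                  holomorphic_shift_diff_shifted_powr)
  then show ?thesis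
    unfolding H_def euler_transform_def[abs_def] f_def
    by (intro holomorphic_intros holomorphic_shift_diff_shifted_powr) auto
qed

lemma zetaE_continuation_exists:
  assumes "q > 0"
  shows "\<exists>f. f holomorphic_on UNIV \<and>
           (\<forall>w. Re w > 0 \<longrightarrow> (\<lambda>n. (-1) ^ n * complex_of_real (real n + q) powr (- w)) sums f w)"
proof (intro exI conjI allI impI)
  define H where "H = (\<lambda>m. {s. Re s > 1 - real m})"
  define f where "f = (\<lambda>s. euler_transform q (nat \<lceil>1 - Re s\<rceil> + 1) s)"
  have f_eq: "f s = euler_transform q m s" if "s \<in> H m" for s m
    unfolding f_def using that of_nat_ceiling[of "1 - Re s"]
    by (intro euler_transform_eq[OF assms]) (auto simp: H_def)
  have "f holomorphic_on (\<Union>m. H m)"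
  proof (rule holomorphic_on_UN_open)
    show "f holomorphic_on H m" for m
      unfolding H_def by (rule holomorphic_transform[OF holomorphic_euler_transform[OF assms, of m]])
         (simp add: f_eq H_def)
  qed (simp add: H_def open_halfspace_Re_gt)
  moreover have "s \<in> H (nat \<lceil>1 - Re s\<rceil> + 1)" for s
    using of_nat_ceiling[of "1 - Re s"] by (simp add: H_def)
  then have "(\<Union>m. H m) = UNIV"
    by blast
  ultimately show "f holomorphic_on UNIV"
    by simp
  show "(\<lambda>n. (-1) ^ n * complex_of_real (real n + q) powr (- w)) sums f w" if "Re w > 0" for w
    using sums_euler_transform[OF assms that] f_eq[of w 1] that by (simp add: H_def)
qed

lemma zetaE_unique:
  assumes "q > 0" and f: "f holomorphic_on UNIV"
    and f_sums: "\<And>w. Re w > 0 \<Longrightarrow> (\<lambda>n. (-1) ^ n * complex_of_real (real n + q) powr (- w)) sums f w"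
  shows "(\<lambda>z. zetaE z q) = f"
proof -
  have "(THE f. f holomorphic_on UNIV \<and>
          (\<forall>w. Re w > 0 \<longrightarrow> (\<lambda>n. (-1) ^ n * complex_of_real (real n + q) powr (- w)) sums f w)) = f"
  proof (rule the_equality)
    fix g assume g: "g holomorphic_on UNIV \<and>
      (\<forall>w. Re w > 0 \<longrightarrow> (\<lambda>n. (-1) ^ n * complex_of_real (real n + q) powr (- w)) sums g w)"
    have eq: "g w = f w" if "w \<in> {w. Re w > 0}" for w
      using g f_sums that sums_unique2 by blast
    have ne: "{w. Re w > 0} \<noteq> {}"
      by (auto intro!: exI[of _ 1])
    show "g = f"
    proof
      fix z
      show "g z = f z"
        by (rule analytic_continuation_open[OF open_halfspace_Re_gt open_UNIV ne connected_UNIV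
                   subset_UNIV conjunct1[OF g] f eq UNIV_I])
    qed
  qed (use f f_sums in blast)
  then show ?thesis
    unfolding zetaE_def .
qed

lemma
  assumes "q > 0"
  shows holomorphic_zetaE: "(\<lambda>z. zetaE z q) holomorphic_on A"
    and sums_zetaE: "Re w > 0 \<Longrightarrow> (\<lambda>n. (-1) ^ n * complex_of_real (real n + q) powr (- w)) sums zetaE w q"
proof -
  obtain f where f: "f holomorphic_on UNIV"
    and f_sums: "\<And>w. Re w > 0 \<Longrightarrow> (\<lambda>n. (-1) ^ n * complex_of_real (real n + q) powr (- w)) sums f w"
    using zetaE_continuation_exists[OF assms] by blast
  have zetaE: "(\<lambda>z. zetaE z q) = f"
    by (rule zetaE_unique[OF assms f f_sums])
  show "(\<lambda>z. zetaE z q) holomorphic_on A"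
    unfolding zetaE by (rule holomorphic_on_subset[OF f subset_UNIV])
  show "(\<lambda>n. (-1) ^ n * complex_of_real (real n + q) powr (- w)) sums zetaE w q" if "Re w > 0"
    using f_sums[OF that] fun_cong[OF zetaE, of w] by simp
qed

section \<open>The Stieltjes constants as derivatives at 1\<close>

lemma power_series_coeff_eq_higher_deriv:
  fixes Z :: "complex \<Rightarrow> complex" and a :: "nat \<Rightarrow> complex"
  assumes "\<And>t. (\<lambda>k. a k * t ^ k) sums Z (z + t)"
  shows "a k = (deriv ^^ k) Z z / fact k"
proof -
  have "(Z \<circ> (\<lambda>t. z + t)) has_fps_expansion Abs_fps a"
    unfolding has_fps_expansion_def
  proof
    have "conv_radius a \<ge> norm (1 :: complex)"
      by (rule conv_radius_geI) (use assms[of 1] in \<open>auto simp: sums_iff\<close>)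
    then show "0 < fps_conv_radius (Abs_fps a)"
      unfolding fps_conv_radius_def by (auto intro: less_le_trans[rotated])
    show "\<forall>\<^sub>F t in nhds 0. eval_fps (Abs_fps a) t = (Z \<circ> (+) z) t"
      using assms by (auto intro!: always_eventually simp: eval_fps_def sums_iff)
  qed
  from fps_nth_fps_expansion[OF this, of k] show ?thesis
    by (simp add: higher_deriv_shift_0[of k Z z])
qed

lemma mod_stieltjes_eq_zetaE_deriv:
  assumes "q > 0"
  shows "mod_stieltjes l q = (-1) ^ l * zetaE_deriv l 1 q"
proof -
  define c where "c = (\<lambda>k. (-1) ^ k * zetaE_deriv k 1 q)"
  have sign: "(-1) ^ k * ((-1) ^ k * x) = (x :: complex)" for k x
    by (simp flip: mult.assoc power_mult_distrib)
  have "(THE c. \<forall>z. (\<lambda>k. (-1) ^ k * c k / fact k * (z - 1) ^ k) sums zetaE z q) = c"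
  proof (rule the_equality)
    show "\<forall>z. (\<lambda>k. (-1) ^ k * c k / fact k * (z - 1) ^ k) sums zetaE z q"
    proof
      fix z
      show "(\<lambda>k. (-1) ^ k * c k / fact k * (z - 1) ^ k) sums zetaE z q"
        using holomorphic_power_series[OF holomorphic_zetaE[OF assms], of z 1 "norm (z - 1) + 1"]
        by (simp add: c_def sign zetaE_deriv_def dist_norm norm_minus_commute)
    qed
  next
    fix c' assume c': "\<forall>z. (\<lambda>k. (-1) ^ k * c' k / fact k * (z - 1) ^ k) sums zetaE z q"
    show "c' = c"
    proof
      fix k
      have "(\<lambda>k. ((-1) ^ k * c' k / fact k) * t ^ k) sums zetaE (1 + t) q" for t
        using c'[rule_format, of "1 + t"] by simp
      from power_series_coeff_eq_higher_deriv[OF this, of k]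
      have "(-1) ^ k * c' k = zetaE_deriv k 1 q"
        by (simp add: zetaE_deriv_def)
      then show "c' k = c k"
        by (metis c_def sign)
    qed
  qed
  then show ?thesis
    by (simp add: mod_stieltjes_def c_def)
qed

section \<open>A binomial expansion of the alternating series\<close>

lemma sums_swap_abs_summable:
  fixes f :: "nat \<Rightarrow> nat \<Rightarrow> 'a :: banach"
  assumes rows: "\<And>n. summable (\<lambda>k. norm (f n k))"
    and total: "summable (\<lambda>n. \<Sum>k. norm (f n k))"
    and row_sums: "(\<lambda>n. \<Sum>k. f n k) sums S"
  shows "(\<lambda>k. \<Sum>n. f n k) sums S"
proof -
  define F where "F = (\<lambda>(n, k). f n k)"
  have "(\<lambda>p. norm (F p)) summable_on UNIV \<times> UNIV"
  proof (rule summable_on_SigmaI)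
    show "((\<lambda>k. norm (F (n, k))) has_sum (\<Sum>k. norm (f n k))) UNIV" for n
      using sums_nonneg_imp_has_sum[OF summable_sums[OF rows]] by (simp add: F_def)
    show "(\<lambda>n. \<Sum>k. norm (f n k)) summable_on UNIV"
      by (rule summable_nonneg_imp_summable_on[OF total]) (simp add: suminf_nonneg[OF rows])
  qed auto
  then have "F summable_on UNIV \<times> UNIV"
    by (rule abs_summable_summable)
  then obtain S' where S': "(F has_sum S') (UNIV \<times> UNIV)"
    unfolding summable_on_def by blast
  have row_has_sum: "((\<lambda>k. F (n, k)) has_sum (\<Sum>k. f n k)) UNIV" for n
    unfolding F_def
    by (simp add: norm_summable_imp_has_sum[OF rows summable_sums[OF summable_norm_cancel[OF rows]]])
  have "((\<lambda>n. \<Sum>k. f n k) has_sum S') UNIV"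
    by (rule has_sum_SigmaD[OF S']) (rule row_has_sum)
  from sums_unique2[OF has_sum_imp_sums[OF this] row_sums] have "S' = S" .
  have columns: "summable (\<lambda>n. norm (f n k))" for k
  proof (rule summable_comparison_test'[OF total, where N = 0])
    show "norm (norm (f n k)) \<le> (\<Sum>k. norm (f n k))" for n
      using sum_le_suminf[OF rows, of "{k}" n] by simp
  qed
  have column_has_sum: "((\<lambda>n. F (n, k)) has_sum (\<Sum>n. f n k)) UNIV" for k
    unfolding F_def
    by (simp add: norm_summable_imp_has_sum[OF columns summable_sums[OF summable_norm_cancel[OF columns]]])
  have "((\<lambda>(k, n). F (n, k)) has_sum S') (UNIV \<times> UNIV)"
    using S' has_sum_swap by blast
  from has_sum_SigmaD[OF this] have "((\<lambda>k. \<Sum>n. f n k) has_sum S') UNIV"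
    using column_has_sum by simp
  from has_sum_imp_sums[OF this] show ?thesis
    using \<open>S' = S\<close> by simp
qed

lemma sums_swap_geometric_bound:
  fixes f :: "nat \<Rightarrow> nat \<Rightarrow> 'a :: banach"
  assumes bound: "\<And>n k. norm (f n k) \<le> B n * \<rho> ^ k" and B: "summable B" and \<rho>: "0 \<le> \<rho>" "\<rho> < 1"
  shows "(\<lambda>n. \<Sum>k. f n k) sums (\<Sum>n. \<Sum>k. f n k)" "(\<lambda>k. \<Sum>n. f n k) sums (\<Sum>n. \<Sum>k. f n k)"
proof -
  have geometric: "summable (\<lambda>k. B n * \<rho> ^ k)" for n
    using \<rho> by (intro summable_mult summable_geometric) auto
  have rows: "summable (\<lambda>k. norm (f n k))" for n
    by (rule summable_comparison_test'[OF geometric, where N = 0]) (use bound in simp)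
  have "(\<Sum>k. norm (f n k)) \<le> B n * (\<Sum>k. \<rho> ^ k)" for n
  proof -
    have "(\<Sum>k. norm (f n k)) \<le> (\<Sum>k. B n * \<rho> ^ k)"
      by (rule suminf_le) (use bound rows geometric in auto)
    also have "\<dots> = B n * (\<Sum>k. \<rho> ^ k)"
      by (rule suminf_mult[OF summable_geometric]) (use \<rho> in auto)
    finally show ?thesis .
  qed
  then have total: "summable (\<lambda>n. \<Sum>k. norm (f n k))"
    by (intro summable_comparison_test'[where N = 0, OF summable_mult2[OF B]]) (simp add: suminf_nonneg rows)
  have "summable (\<lambda>n. \<Sum>k. f n k)"
    by (rule summable_comparison_test'[OF total, where N = 0]) (simp add: summable_norm rows)
  then show "(\<lambda>n. \<Sum>k. f n k) sums (\<Sum>n. \<Sum>k. f n k)"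
    by (rule summable_sums)
  then show "(\<lambda>k. \<Sum>n. f n k) sums (\<Sum>n. \<Sum>k. f n k)"
    by (rule sums_swap_abs_summable[OF rows total])
qed

lemma norm_gbinomial_le: "norm ((a :: complex) gchoose k) \<le> (1 + norm a) ^ k"
proof (induction k)
  case (Suc k)
  have "of_nat (Suc k) * (a gchoose Suc k) = (a - of_nat k) * (a gchoose k)"
    using gbinomial_mult_1[of a k] by (simp add: algebra_simps)
  then have "real (Suc k) * norm (a gchoose Suc k) = norm (a - of_nat k) * norm (a gchoose k)"
    by (metis norm_mult norm_of_nat)
  also have "\<dots> \<le> (norm a + k) * (1 + norm a) ^ k"
    by (intro mult_mono Suc.IH) (auto intro: order.trans[OF norm_triangle_ineq4])
  also have "\<dots> \<le> real (Suc k) * (1 + norm a) ^ Suc k"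
    by (simp add: algebra_simps mult_right_mono)
  finally show ?case
    by (rule mult_left_le_imp_le) simp
qed simp

lemma sums_gen_binomial_tail2:
  fixes x y :: real and A :: complex
  assumes "\<bar>y\<bar> < \<bar>x\<bar>"
  shows "(\<lambda>k. (A gchoose (k + 2)) * of_real x powr (A - of_nat (k + 2)) * of_real y ^ (k + 2))
           sums (of_real (x + y) powr A - of_real x powr A - A * of_real x powr (A - 1) * of_real y)"
  using sums_split_initial_segment[OF gen_binomial_complex''[OF assms, of A], of 2]
  by (simp add: numeral_2_eq_2 algebra_simps)

text \<open>The double series given by the binomial expansion converges absolutely thanks to the
  bound on a, so it may be summed over n first.\<close>
lemma zetaE_binomial_expansion:
  fixes a q :: real and s :: complex
  assumes q: "q > 0" and s: "Re s > 0" and a: "\<bar>a\<bar> * (1 + norm (1 - s)) < q"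
  shows "\<exists>V. (\<lambda>n. (-1) ^ n * (complex_of_real (real n + q + a) powr (1 - s)
                   - complex_of_real (real n + q) powr (1 - s)
                   - of_real a * (1 - s) * complex_of_real (real n + q) powr (- s))) sums V
           \<and> (\<lambda>k. ((1 - s) gchoose (k + 2)) * of_real a ^ (k + 2) * zetaE (s + of_nat (k + 1)) q)
               sums V"
proof -
  define A where "A = 1 - s"
  define x where "x = (\<lambda>n::nat. real n + q)"
  define f where "f = (\<lambda>n k. (-1) ^ n * ((A gchoose (k + 2)) * of_real a ^ (k + 2)
                                          * complex_of_real (x n) powr (A - of_nat (k + 2))))"
  have x: "x n \<ge> q" for n
    by (simp add: x_def)
  have exponent: "A - of_nat (k + 2) = - (s + of_nat (k + 1))" for k
    by (simp add: A_def algebra_simps)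
  have row: "(\<lambda>k. f n k) sums ((-1) ^ n * (complex_of_real (x n + a) powr A
              - complex_of_real (x n) powr A - of_real a * A * complex_of_real (x n) powr (- s)))" for n
  proof -
    have "\<bar>a\<bar> < \<bar>x n\<bar>"
      using a x[of n] q by (smt (verit) mult_le_cancel_left1 norm_ge_zero)
    from sums_mult[OF sums_gen_binomial_tail2[OF this, of A], of "(-1) ^ n"] show ?thesis
      unfolding f_def A_def by (simp add: algebra_simps)
  qed
  have column: "(\<lambda>n. f n k) sums ((A gchoose (k + 2)) * of_real a ^ (k + 2) * zetaE (s + of_nat (k + 1)) q)"
    for k
    using sums_mult[OF sums_zetaE[OF q, of "s + of_nat (k + 1)"], of "(A gchoose (k + 2)) * of_real a ^ (k + 2)"] s
    unfolding f_def exponent x_def by (simp add: mult_ac)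
  define b where "b = (1 + norm A) * \<bar>a\<bar>"
  define \<rho> where "\<rho> = b / q"
  define P where "P = (\<lambda>n. x n powr (- (Re s + 1)))"
  have \<rho>: "0 \<le> \<rho>" "\<rho> < 1"
    using a q by (auto simp: \<rho>_def b_def A_def mult.commute)
  have f_bound: "norm (f n k) \<le> b\<^sup>2 * P n * \<rho> ^ k" for n k
  proof -
    have "x n powr (- (Re s + real (k + 1))) = P n * x n powr (- real k)"
      unfolding P_def using x[of n] q by (simp flip: powr_add add: algebra_simps)
    also have "\<dots> \<le> P n * q powr (- real k)"
      by (intro mult_left_mono powr_mono2') (use x[of n] q in \<open>auto simp: P_def\<close>)
    finally have x_bound: "x n powr (- (Re s + real (k + 1))) \<le> P n / q ^ k"
      using q by (simp add: powr_minus powr_realpow divide_inverse)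
    have "norm (f n k) = norm (A gchoose (k + 2)) * \<bar>a\<bar> ^ (k + 2) * x n powr (- (Re s + real (k + 1)))"
      unfolding f_def exponent using x[of n] q by (simp add: norm_mult norm_power norm_powr_real_powr)
    also have "\<dots> \<le> (1 + norm A) ^ (k + 2) * \<bar>a\<bar> ^ (k + 2) * (P n / q ^ k)"
      by (intro mult_mono norm_gbinomial_le x_bound) auto
    also have "\<dots> = b\<^sup>2 * P n * \<rho> ^ k"
      by (simp add: b_def \<rho>_def power_mult_distrib power_add power_divide power2_eq_square)
    finally show ?thesis .
  qed
  have "summable (\<lambda>n. b\<^sup>2 * P n)"
    unfolding P_def x_def by (intro summable_mult summable_real_powr_shift) (use q s in auto)
  from sums_swap_geometric_bound[OF f_bound this \<rho>] show ?thesis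
    using row column by (auto simp: sums_iff A_def x_def add_ac)
qed

lemma sums_alternating_powr_diff2:
  assumes "b > 0" "Re w < 1"
  shows "(\<lambda>n. (-1) ^ n * (complex_of_real (real n + b) powr w - complex_of_real (real n + b + 2) powr w))
           sums (complex_of_real b powr w - complex_of_real (b + 1) powr w)"
proof -
  define u where "u = (\<lambda>n::nat. complex_of_real (real n + b) powr w)"
  define v where "v = (\<lambda>n. (-1) ^ n * (u n - u (Suc n)))"
  have "(\<lambda>n. shift_diff 1 (shifted_powr b (- w)) (of_nat n)) \<longlonglongrightarrow> 0"
    by (rule shift_diff_shifted_powr_tendsto_0) (use assms in auto)
  moreover have "shift_diff 1 (shifted_powr b (- w)) (of_nat n) = u n - u (Suc n)" for n
    by (simp add: u_def shifted_powr_def add_ac)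
  ultimately have u_diff: "(\<lambda>n. u n - u (Suc n)) \<longlonglongrightarrow> 0"
    by simp
  have "v \<longlonglongrightarrow> 0"
    unfolding v_def
    by (rule tendsto_norm_zero_cancel) (use tendsto_norm_zero[OF u_diff] in \<open>simp add: norm_mult norm_power\<close>)
  from telescope_sums'[OF this] have "(\<lambda>n. v n - v (Suc n)) sums (u 0 - u 1)"
    by (simp add: v_def)
  moreover have "v n - v (Suc n) = (-1) ^ n * (u n - u (n + 2))" for n
    by (simp add: v_def algebra_simps)
  ultimately show ?thesis
    by (simp add: u_def add_ac)
qed

lemma sums_zetaE_gbinomial_pow2:
  assumes q: "q > 2" and s: "Re s > 0" "2 * (1 + norm (1 - s)) < q"
  shows "(\<lambda>k. (-1) ^ Suc k * 2 ^ Suc k * ((1 - s) gchoose (k + 2)) * zetaE (s + of_nat (k + 1)) q)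
           sums ((complex_of_real (q - 1) powr (1 - s) - complex_of_real (q - 2) powr (1 - s)) / 2
                 - (1 - s) * zetaE s q)"
proof -
  obtain V where T: "(\<lambda>n. (-1) ^ n * (complex_of_real (real n + q + -2) powr (1 - s)
                         - complex_of_real (real n + q) powr (1 - s)
                         - of_real (-2) * (1 - s) * complex_of_real (real n + q) powr (- s))) sums V"
    and K: "(\<lambda>k. ((1 - s) gchoose (k + 2)) * of_real (-2) ^ (k + 2) * zetaE (s + of_nat (k + 1)) q)
              sums V"
    using zetaE_binomial_expansion[of q s "-2"] q s by auto
  have "(\<lambda>n. (-1) ^ n * (complex_of_real (real n + (q - 2)) powr (1 - s)
                         - complex_of_real (real n + (q - 2) + 2) powr (1 - s))
             + 2 * (1 - s) * ((-1) ^ n * complex_of_real (real n + q) powr (- s)))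
          sums (complex_of_real (q - 2) powr (1 - s) - complex_of_real (q - 2 + 1) powr (1 - s)
                + 2 * (1 - s) * zetaE s q)"
    by (intro sums_add sums_mult sums_alternating_powr_diff2 sums_zetaE) (use q s in auto)
  then have "(\<lambda>n. (-1) ^ n * (complex_of_real (real n + q + -2) powr (1 - s)
                         - complex_of_real (real n + q) powr (1 - s)
                         - of_real (-2) * (1 - s) * complex_of_real (real n + q) powr (- s)))
          sums (complex_of_real (q - 2) powr (1 - s) - complex_of_real (q - 1) powr (1 - s)
                + 2 * (1 - s) * zetaE s q)"
    by (simp add: algebra_simps)
  from sums_unique2[OF T this] sums_mult[OF K, of "- 1 / 2"]
  have "(\<lambda>k. - 1 / 2 * (((1 - s) gchoose (k + 2)) * of_real (-2) ^ (k + 2) * zetaE (s + of_nat (k + 1)) q))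
          sums (- 1 / 2 * (complex_of_real (q - 2) powr (1 - s) - complex_of_real (q - 1) powr (1 - s)
                           + 2 * (1 - s) * zetaE s q))"
    by simp
  moreover have "- 1 / 2 * (of_real (-2) :: complex) ^ (k + 2) = (-1) ^ Suc k * 2 ^ Suc k" for k
    by (simp add: power_minus')
  ultimately show ?thesis
    by (simp add: algebra_simps diff_divide_distrib)
qed

lemma sums_zetaE_gbinomial_odd:
  assumes q: "q > 1" and s: "Re s > 0" "1 + norm (1 - s) < q"
  shows "(\<lambda>k. of_bool (odd k) * ((1 - s) gchoose (k + 2)) * zetaE (s + of_nat (k + 1)) q)
           sums ((complex_of_real q powr (1 - s) - complex_of_real (q - 1) powr (1 - s)) / 2
                 - (1 - s) * zetaE s q)"
proof -
  obtain V\<^sub>1 where T\<^sub>1: "(\<lambda>n. (-1) ^ n * (complex_of_real (real n + q + 1) powr (1 - s)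
                         - complex_of_real (real n + q) powr (1 - s)
                         - of_real 1 * (1 - s) * complex_of_real (real n + q) powr (- s))) sums V\<^sub>1"
    and K\<^sub>1: "(\<lambda>k. ((1 - s) gchoose (k + 2)) * of_real 1 ^ (k + 2) * zetaE (s + of_nat (k + 1)) q)
              sums V\<^sub>1"
    using zetaE_binomial_expansion[of q s 1] q s by auto
  obtain V\<^sub>2 where T\<^sub>2: "(\<lambda>n. (-1) ^ n * (complex_of_real (real n + q + -1) powr (1 - s)
                         - complex_of_real (real n + q) powr (1 - s)
                         - of_real (-1) * (1 - s) * complex_of_real (real n + q) powr (- s))) sums V\<^sub>2"
    and K\<^sub>2: "(\<lambda>k. ((1 - s) gchoose (k + 2)) * of_real (-1) ^ (k + 2) * zetaE (s + of_nat (k + 1)) q)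
              sums V\<^sub>2"
    using zetaE_binomial_expansion[of q s "-1"] q s by auto
  have "(\<lambda>n. - ((-1) ^ n * (complex_of_real (real n + (q - 1)) powr (1 - s)
                              - complex_of_real (real n + (q - 1) + 2) powr (1 - s)))
             - 2 * (1 - s) * ((-1) ^ n * complex_of_real (real n + q) powr (- s)))
          sums (- (complex_of_real (q - 1) powr (1 - s) - complex_of_real (q - 1 + 1) powr (1 - s))
                - 2 * (1 - s) * zetaE s q)"
    by (intro sums_diff sums_minus sums_mult sums_alternating_powr_diff2 sums_zetaE) (use q s in auto)
  then have "(\<lambda>n. (-1) ^ n * (complex_of_real (real n + q + 1) powr (1 - s)
                         - complex_of_real (real n + q) powr (1 - s)
                         - of_real 1 * (1 - s) * complex_of_real (real n + q) powr (- s))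
                - (-1) ^ n * (complex_of_real (real n + q + -1) powr (1 - s)
                         - complex_of_real (real n + q) powr (1 - s)
                         - of_real (-1) * (1 - s) * complex_of_real (real n + q) powr (- s)))
          sums (complex_of_real q powr (1 - s) - complex_of_real (q - 1) powr (1 - s)
                - 2 * (1 - s) * zetaE s q)"
    by (simp add: algebra_simps)
  from sums_unique2[OF sums_diff[OF T\<^sub>1 T\<^sub>2] this] sums_divide[OF sums_diff[OF K\<^sub>1 K\<^sub>2], of 2]
  have "(\<lambda>k. (((1 - s) gchoose (k + 2)) * of_real 1 ^ (k + 2) * zetaE (s + of_nat (k + 1)) q
              - ((1 - s) gchoose (k + 2)) * of_real (-1) ^ (k + 2) * zetaE (s + of_nat (k + 1)) q) / 2)
          sums ((complex_of_real q powr (1 - s) - complex_of_real (q - 1) powr (1 - s)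
                - 2 * (1 - s) * zetaE s q) / 2)"
    by simp
  also have "(\<lambda>k. (((1 - s) gchoose (k + 2)) * of_real 1 ^ (k + 2) * zetaE (s + of_nat (k + 1)) q
              - ((1 - s) gchoose (k + 2)) * of_real (-1) ^ (k + 2) * zetaE (s + of_nat (k + 1)) q) / 2)
      = (\<lambda>k. of_bool (odd k) * ((1 - s) gchoose (k + 2)) * zetaE (s + of_nat (k + 1)) q)"
    by (rule ext) (simp add: divide_simps)
  also have "(complex_of_real q powr (1 - s) - complex_of_real (q - 1) powr (1 - s) - 2 * (1 - s) * zetaE s q) / 2
      = (complex_of_real q powr (1 - s) - complex_of_real (q - 1) powr (1 - s)) / 2 - (1 - s) * zetaE s q"
    by (simp add: diff_divide_distrib)
  finally show ?thesis .
qed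

section \<open>Differentiation at s = 1\<close>

lemma gbinomial_one_minus_stirling1s:
  fixes s :: "'a :: field_char_0"
  shows "(1 - s) gchoose m = (\<Sum>i\<le>m. (-1) ^ i * of_int (stirling1s m i) / fact m * (s - 1) ^ i)"
proof -
  have "(1 - s) gchoose m = (-1) ^ m * pochhammer (s - 1) m / fact m"
    using gbinomial_pochhammer[of "1 - s" m] by simp
  also have "pochhammer (s - 1) m = (\<Sum>i\<le>m. of_nat (stirling m i) * (s - 1) ^ i)"
    by (rule stirling_pochhammer[symmetric])
  also have "(-1) ^ m * \<dots> / fact m = (\<Sum>i\<le>m. (-1) ^ i * of_int (stirling1s m i) / fact m * (s - 1) ^ i)"
    unfolding sum_distrib_left sum_divide_distrib
  proof (intro sum.cong refl)
    fix i assume "i \<in> {..m}"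
    then have "(-1 :: 'a) ^ m = (-1) ^ i * (-1) ^ (m - i)"
      by (simp flip: power_add)
    then show "(-1) ^ m * (of_nat (stirling m i) * (s - 1) ^ i) / fact m
                 = (-1) ^ i * of_int (stirling1s m i) / fact m * (s - 1) ^ i"
      by (simp add: stirling1s_def)
  qed
  finally show ?thesis .
qed

lemma holomorphic_gbinomial_one_minus: "(\<lambda>s. (1 - s) gchoose m :: complex) holomorphic_on A"
  unfolding gbinomial_one_minus_stirling1s by (intro holomorphic_intros)

lemma holomorphic_zetaE_shift:
  assumes "q > 0"
  shows "(\<lambda>s. zetaE (s + c) q) holomorphic_on A"
proof -
  have "(\<lambda>s. s + c) holomorphic_on A"
    by (intro holomorphic_intros)
  from holomorphic_on_compose[OF this holomorphic_zetaE[OF assms]] show ?thesis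
    by (simp add: o_def)
qed

lemma higher_deriv_sum:
  fixes f :: "'i \<Rightarrow> complex \<Rightarrow> complex"
  assumes "finite I" "\<And>i. i \<in> I \<Longrightarrow> f i holomorphic_on UNIV"
  shows "(deriv ^^ n) (\<lambda>w. \<Sum>i\<in>I. f i w) z = (\<Sum>i\<in>I. (deriv ^^ n) (f i) z)"
  using assms
proof (induction I rule: finite_induct)
  case (insert x F)
  have "(deriv ^^ n) (\<lambda>w. f x w + (\<Sum>i\<in>F. f i w)) z
          = (deriv ^^ n) (f x) z + (deriv ^^ n) (\<lambda>w. \<Sum>i\<in>F. f i w) z"
    by (rule higher_deriv_add) (use insert in \<open>auto intro!: holomorphic_on_sum\<close>)
  with insert show ?case
    by simp
qed simp

lemma higher_deriv_power_at_1:
  "(deriv ^^ j) (\<lambda>s. (s - 1) ^ n) (1 :: complex) = (if j = n then fact n else 0)"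
proof -
  have "(deriv ^^ j) (\<lambda>s. (s - 1) ^ n) (1 :: complex) = pochhammer (of_nat (Suc n - j)) j * (1 - 1) ^ (n - j)"
    by (rule higher_deriv_power)
  also have "\<dots> = (if j = n then fact n else 0)"
    by (cases "j \<le> n") (auto simp: pochhammer_fact pochhammer_0_left)
  finally show ?thesis .
qed

lemma higher_deriv_poly_mult_at_1:
  assumes "Z holomorphic_on UNIV"
  shows "(deriv ^^ n) (\<lambda>s. (\<Sum>i\<le>m. b i * (s - 1) ^ i) * Z s) 1
           = (\<Sum>i\<le>n. of_nat (n choose i) * (if i \<le> m then fact i * b i else 0) * (deriv ^^ (n - i)) Z 1)"
proof -
  have "(deriv ^^ i) (\<lambda>s. \<Sum>k\<le>m. b k * (s - 1) ^ k) 1 = (\<Sum>k\<le>m. b k * (deriv ^^ i) (\<lambda>s. (s - 1) ^ k) 1)" for i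
    by (subst higher_deriv_sum) (auto intro!: holomorphic_intros sum.cong higher_deriv_cmult[of _ UNIV])
  also have "\<dots> i = (if i \<le> m then fact i * b i else 0)" for i
    by (simp add: higher_deriv_power_at_1 if_distrib sum.delta' mult.commute cong: if_cong)
  finally have "(deriv ^^ i) (\<lambda>s. \<Sum>k\<le>m. b k * (s - 1) ^ k) 1 = (if i \<le> m then fact i * b i else 0)" for i .
  moreover have "(deriv ^^ n) (\<lambda>s. (\<Sum>i\<le>m. b i * (s - 1) ^ i) * Z s) 1 =
     (\<Sum>i=0..n. of_nat (n choose i) * (deriv ^^ i) (\<lambda>s. \<Sum>i\<le>m. b i * (s - 1) ^ i) 1 * (deriv ^^ (n - i)) Z 1)"
    by (rule higher_deriv_mult[of _ UNIV]) (auto intro!: holomorphic_intros assms)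
  ultimately show ?thesis
    by (simp add: atLeast0AtMost)
qed

text \<open>The Leibniz rule at s = 1: only the derivatives of order 1 to l + 1 of the polynomial
  (1 - s) gchoose m contribute, and these are read off from the Stirling expansion.\<close>
lemma higher_deriv_gbinomial_mult:
  assumes "Z holomorphic_on UNIV" "m > 0"
  shows "(deriv ^^ Suc l) (\<lambda>s. ((1 - s) gchoose m) * Z s) 1
           = (-1) ^ Suc l * fact (Suc l) / fact m
             * (\<Sum>j\<le>l. (-1) ^ j / fact j * of_int (stirling1s m (l - j + 1)) * (deriv ^^ j) Z 1)"
proof -
  define b where "b = (\<lambda>i. (-1) ^ i * of_int (stirling1s m i) / fact m :: complex)"
  define h where "h = (\<lambda>i. of_nat (Suc l choose i) * (if i \<le> m then fact i * b i else 0)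
                           * (deriv ^^ (Suc l - i)) Z 1)"
  have "(deriv ^^ Suc l) (\<lambda>s. ((1 - s) gchoose m) * Z s) 1
          = (deriv ^^ Suc l) (\<lambda>s. (\<Sum>i\<le>m. b i * (s - 1) ^ i) * Z s) 1"
    by (simp add: gbinomial_one_minus_stirling1s b_def)
  also have "\<dots> = (\<Sum>i\<le>Suc l. h i)"
    unfolding h_def by (rule higher_deriv_poly_mult_at_1[OF assms(1)])
  also have "\<dots> = (\<Sum>j\<le>l. h (Suc l - j))"
  proof -
    have "h 0 = 0"
      using assms(2) by (simp add: h_def b_def stirling1s_def)
    then have "(\<Sum>i\<le>Suc l. h i) = (\<Sum>i\<le>l. h (Suc i))"
      unfolding sum.atMost_Suc_shift by simp
    also have "\<dots> = (\<Sum>j\<le>l. h (Suc (l - j)))"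
      by (rule sum.reindex_bij_witness[of _ "\<lambda>j. l - j" "\<lambda>i. l - i"]) auto
    finally show ?thesis
      by (simp add: Suc_diff_le)
  qed
  also have "\<dots> = (\<Sum>j\<le>l. (-1) ^ Suc l * fact (Suc l) / fact m
                   * ((-1) ^ j / fact j * of_int (stirling1s m (l - j + 1)) * (deriv ^^ j) Z 1))"
  proof (intro sum.cong refl)
    fix j assume "j \<in> {..l}"
    then have j: "Suc l - j = l - j + 1" "Suc l - (Suc l - j) = j" "j \<le> Suc l" "j \<le> l"
      by auto
    show "h (Suc l - j) = (-1) ^ Suc l * fact (Suc l) / fact m
            * ((-1) ^ j / fact j * of_int (stirling1s m (l - j + 1)) * (deriv ^^ j) Z 1)"
    proof (cases "l - j + 1 \<le> m")
      case True
      have binomial: "of_nat (Suc l choose (l - j + 1)) * fact (l - j + 1) = (fact (Suc l) / fact j :: complex)"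
        using fact_binomial[of "l - j + 1" "Suc l"] j by (simp add: mult.commute del: binomial_Suc_Suc fact_Suc)
      have sign: "(-1 :: complex) ^ (l - j + 1) = (-1) ^ Suc l * (-1) ^ j"
        using j by (simp add: power_diff_conv_inverse flip: j(1))
      have "h (Suc l - j) = (of_nat (Suc l choose (l - j + 1)) * fact (l - j + 1)) * (-1) ^ (l - j + 1)
                             * of_int (stirling1s m (l - j + 1)) / fact m * (deriv ^^ j) Z 1"
        using True j(4) unfolding h_def b_def j(1,2) by (simp del: binomial_Suc_Suc fact_Suc)
      also have "\<dots> = (-1) ^ Suc l * fact (Suc l) / fact m
                        * ((-1) ^ j / fact j * of_int (stirling1s m (l - j + 1)) * (deriv ^^ j) Z 1)"
        unfolding binomial sign by (simp add: field_simps del: fact_Suc)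
      finally show ?thesis .
    next
      case False
      then show ?thesis
        by (simp add: h_def j stirling1s_def)
    qed
  qed
  finally show ?thesis
    by (simp add: sum_distrib_left)
qed

lemma higher_deriv_exp_affine:
  "(deriv ^^ n) (\<lambda>s. exp (c * s + d)) = (\<lambda>s. c ^ n * exp (c * s + d :: complex))"
proof (induction n)
  case (Suc n)
  have "deriv (\<lambda>s. c ^ n * exp (c * s + d)) z = c ^ Suc n * exp (c * z + d)" for z
    by (rule DERIV_imp_deriv) (auto intro!: derivative_eq_intros)
  then show ?case
    unfolding funpow.simps o_apply Suc.IH by (intro ext)
qed simp

lemma higher_deriv_powr_one_minus:
  assumes "\<alpha> > 0"
  shows "(deriv ^^ n) (\<lambda>s. complex_of_real \<alpha> powr (1 - s)) 1 = (- of_real (ln \<alpha>)) ^ n"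
proof -
  define L where "L = complex_of_real (ln \<alpha>)"
  have "(\<lambda>s. complex_of_real \<alpha> powr (1 - s)) = (\<lambda>s. exp (- L * s + L))"
    using assms by (simp add: fun_eq_iff powr_def L_def Ln_of_real algebra_simps)
  then show ?thesis
    using higher_deriv_exp_affine[of n "- L" L] by (simp add: L_def)
qed

lemma norm_zetaE_shift_le:
  assumes q: "q \<ge> 1" and s: "Re s \<ge> \<sigma>" "\<sigma> > 0"
  shows "norm (zetaE (s + of_nat (k + 1)) q) \<le> (\<Sum>n. (real n + q) powr (- (\<sigma> + 1))) / q ^ k"
proof -
  define f where "f = (\<lambda>n. (-1) ^ n * complex_of_real (real n + q) powr (- (s + of_nat (k + 1))))"
  define g where "g = (\<lambda>n. (real n + q) powr (- (\<sigma> + 1)) / q ^ k)"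
  have g: "summable g"
    unfolding g_def by (intro summable_divide summable_real_powr_shift) (use q s in auto)
  have f_le: "norm (f n) \<le> g n" for n
  proof -
    have "norm (f n) = (real n + q) powr (- Re (s + of_nat (k + 1)))"
      using q by (simp add: f_def norm_mult norm_power norm_powr_real_powr)
    also have "\<dots> = (real n + q) powr (- (Re s + 1) + - real k)"
      by (rule arg_cong[where f = "(powr) (real n + q)"]) simp
    also have "\<dots> = (real n + q) powr (- (Re s + 1)) * (real n + q) powr (- real k)"
      by (rule powr_add)
    also have "\<dots> \<le> (real n + q) powr (- (\<sigma> + 1)) * q powr (- real k)"
      using q s by (intro mult_mono powr_mono powr_mono2') auto
    finally show ?thesis
      using q by (simp add: g_def powr_minus powr_realpow divide_inverse)
  qed
  have "f sums zetaE (s + of_nat (k + 1)) q"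
    unfolding f_def by (rule sums_zetaE) (use q s in auto)
  from norm_sums_le[OF this summable_sums[OF g] f_le] show ?thesis
    using suminf_divide[OF summable_real_powr_shift, of q "\<sigma> + 1" "q ^ k"] q s by (simp add: g_def)
qed

definition stirling_zetaE_sum :: "nat \<Rightarrow> real \<Rightarrow> nat \<Rightarrow> complex" where
  "stirling_zetaE_sum l q m =
     (\<Sum>j\<le>l. (-1) ^ j / fact j * of_int (stirling1s m (l - j + 1)) * zetaE_deriv j (of_nat m) q)"

lemma higher_deriv_gbinomial_zetaE:
  assumes "q > 0" "m > 0"
  shows "(deriv ^^ Suc l) (\<lambda>s. ((1 - s) gchoose m) * zetaE (s + of_nat (m - 1)) q) 1
           = (-1) ^ Suc l * fact (Suc l) / fact m * stirling_zetaE_sum l q m"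
proof -
  have shift: "(deriv ^^ j) (\<lambda>s. zetaE (s + of_nat (m - 1)) q) 1 = zetaE_deriv j (of_nat m) q" for j
    using higher_deriv_compose_linear'[OF holomorphic_zetaE[OF assms(1)], of UNIV UNIV 1 1 "of_nat (m - 1)" j]
          assms(2)
    by (simp add: zetaE_deriv_def of_nat_diff add.commute)
  from higher_deriv_gbinomial_mult[OF holomorphic_zetaE_shift[OF assms(1), where c = "of_nat (m - 1)"] assms(2)]
  show ?thesis
    unfolding shift stirling_zetaE_sum_def .
qed

lemma higher_deriv_gbinomial_zetaE_term:
  assumes "q > 0"
  shows "(deriv ^^ Suc l) (\<lambda>s. w * ((1 - s) gchoose (k + 2)) * zetaE (s + of_nat (k + 1)) q) 1
           = (-1) ^ Suc l * fact (Suc l) * (w / fact (k + 2) * stirling_zetaE_sum l q (k + 2))"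
proof -
  have "(deriv ^^ Suc l) (\<lambda>s. w * ((1 - s) gchoose (k + 2)) * zetaE (s + of_nat (k + 1)) q) 1
          = w * (deriv ^^ Suc l) (\<lambda>s. ((1 - s) gchoose (k + 2)) * zetaE (s + of_nat (k + 1)) q) 1"
    unfolding mult.assoc
    by (rule higher_deriv_cmult[of _ UNIV])
       (auto intro!: holomorphic_intros holomorphic_gbinomial_one_minus holomorphic_zetaE_shift assms)
  then show ?thesis
    using higher_deriv_gbinomial_zetaE[OF assms, of "k + 2" l] by simp
qed

lemma stirling_zetaE_sum_1: "stirling_zetaE_sum l q 1 = (-1) ^ l / fact l * zetaE_deriv l 1 q"
proof -
  have "stirling_zetaE_sum l q 1 = (\<Sum>j\<le>l. if j = l then (-1) ^ l / fact l * zetaE_deriv l 1 q else 0)"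
    unfolding stirling_zetaE_sum_def by (rule sum.cong) (auto simp: stirling1s_def)
  then show ?thesis
    by simp
qed

lemma higher_deriv_gbinomial_zetaE_series:
  fixes w :: "nat \<Rightarrow> complex"
  assumes q: "q \<ge> 1" and r: "0 < r" "r \<le> 1/2" and w: "\<And>k. norm (w k) \<le> C * a ^ k"
    and a: "0 \<le> a" "(1 + r) * a < q"
  shows "(\<lambda>k. (deriv ^^ n) (\<lambda>s. w k * ((1 - s) gchoose (k + 2)) * zetaE (s + of_nat (k + 1)) q) 1)
           sums (deriv ^^ n) (\<lambda>s. \<Sum>k. w k * ((1 - s) gchoose (k + 2)) * zetaE (s + of_nat (k + 1)) q) 1"
proof -
  define g where "g = (\<lambda>k s. w k * ((1 - s) gchoose (k + 2)) * zetaE (s + of_nat (k + 1)) q)"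
  define M where "M = (\<Sum>n. (real n + q) powr (- (1/2 + 1)))"
  define \<rho> where "\<rho> = (1 + r) * a / q"
  have \<rho>: "0 \<le> \<rho>" "\<rho> < 1"
    using q r a by (auto simp: \<rho>_def)
  have C: "C \<ge> 0"
    using order_trans[OF norm_ge_zero w[of 0]] by simp
  have holomorphic_g: "g k holomorphic_on A" for k A
    unfolding g_def using q
    by (intro holomorphic_intros holomorphic_gbinomial_one_minus holomorphic_zetaE_shift) auto
  have bound: "norm (g k s) \<le> C * (1 + r)\<^sup>2 * M * \<rho> ^ k" if "s \<in> ball 1 r" for k s
  proof -
    have "norm (1 - s) \<le> r" "Re s \<ge> 1/2"
      using that r abs_Re_le_cmod[of "1 - s"] by (auto simp: dist_norm)
    then have "norm ((1 - s) gchoose (k + 2)) \<le> (1 + r) ^ (k + 2)"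
      using norm_gbinomial_le[of "1 - s" "k + 2"] power_mono[of "1 + norm (1 - s)" "1 + r" "k + 2"]
      by auto
    moreover have "norm (zetaE (s + of_nat (k + 1)) q) \<le> M / q ^ k"
      unfolding M_def by (rule norm_zetaE_shift_le) (use q \<open>Re s \<ge> 1/2\<close> in auto)
    ultimately have "norm (g k s) \<le> C * a ^ k * (1 + r) ^ (k + 2) * (M / q ^ k)"
      unfolding g_def norm_mult using C a r by (intro mult_mono w) auto
    also have "\<dots> = C * (1 + r)\<^sup>2 * M * \<rho> ^ k"
      by (simp add: \<rho>_def power_divide power_mult_distrib power_add power2_eq_square mult_ac)
    finally show ?thesis .
  qed
  have "uniform_limit (ball 1 r) (\<lambda>N s. \<Sum>k<N. g k s) (\<lambda>s. \<Sum>k. g k s) sequentially"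
    by (rule Weierstrass_m_test[OF bound]) (use \<rho> in \<open>auto intro!: summable_mult summable_geometric\<close>)
  then have "(\<lambda>N. (deriv ^^ n) (\<lambda>s. \<Sum>k<N. g k s) 1) \<longlonglongrightarrow> (deriv ^^ n) (\<lambda>s. \<Sum>k. g k s) 1"
    by (rule higher_deriv_complex_uniform_limit)
       (use r in \<open>auto intro!: always_eventually holomorphic_intros holomorphic_g\<close>)
  moreover have "(deriv ^^ n) (\<lambda>s. \<Sum>k<N. g k s) 1 = (\<Sum>k<N. (deriv ^^ n) (g k) 1)" for N
    by (rule higher_deriv_sum) (auto intro: holomorphic_g)
  ultimately show ?thesis
    unfolding sums_def g_def by simp
qed

text \<open>The term (1 - s) zetaE s q is the binomial term with m = 1; it produces the Stieltjes
  constant.\<close>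
lemma higher_deriv_powr_diff_minus_zetaE:
  assumes q: "q > 0" and \<alpha>\<beta>: "\<alpha> > 0" "\<beta> > 0"
  shows "(deriv ^^ Suc l)
           (\<lambda>s. (complex_of_real \<alpha> powr (1 - s) - complex_of_real \<beta> powr (1 - s)) / 2 - (1 - s) * zetaE s q) 1
         = (-1) ^ Suc l * fact (Suc l)
           * (of_real ((ln \<alpha> ^ (l + 1) - ln \<beta> ^ (l + 1)) / (2 * fact (Suc l))) - mod_stieltjes l q / fact l)"
proof -
  define P where "P = (\<lambda>s. complex_of_real \<alpha> powr (1 - s) - complex_of_real \<beta> powr (1 - s))"
  define Z where "Z = (\<lambda>s. ((1 - s) gchoose 1) * zetaE (s + of_nat (1 - 1)) q)"
  define D where "D = complex_of_real (ln \<alpha>) ^ Suc l - complex_of_real (ln \<beta>) ^ Suc l"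
  have P: "P holomorphic_on UNIV" and Z: "Z holomorphic_on UNIV"
    unfolding P_def Z_def
    by (intro holomorphic_intros holomorphic_gbinomial_one_minus holomorphic_zetaE_shift q)+
  have "(\<lambda>s. P s / 2 - (1 - s) * zetaE s q) = (\<lambda>s. 1 / 2 * P s - Z s)"
    by (simp add: Z_def fun_eq_iff)
  then have "(deriv ^^ Suc l) (\<lambda>s. P s / 2 - (1 - s) * zetaE s q) 1
               = (deriv ^^ Suc l) (\<lambda>s. 1 / 2 * P s) 1 - (deriv ^^ Suc l) Z 1"
    by (simp only:) (rule higher_deriv_diff[of _ UNIV], auto intro!: holomorphic_intros P Z)
  also have "(deriv ^^ Suc l) (\<lambda>s. 1 / 2 * P s) 1 = 1 / 2 * (deriv ^^ Suc l) P 1"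
    by (rule higher_deriv_cmult[OF P]) auto
  also have "(deriv ^^ Suc l) P 1 = (deriv ^^ Suc l) (\<lambda>s. complex_of_real \<alpha> powr (1 - s)) 1
                                    - (deriv ^^ Suc l) (\<lambda>s. complex_of_real \<beta> powr (1 - s)) 1"
    unfolding P_def by (rule higher_deriv_diff[of _ UNIV]) (auto intro!: holomorphic_intros)
  also have "\<dots> = (- of_real (ln \<alpha>)) ^ Suc l - (- of_real (ln \<beta>)) ^ Suc l"
    by (simp only: higher_deriv_powr_one_minus \<alpha>\<beta>)
  also have "\<dots> = (-1) ^ Suc l * D"
    unfolding D_def power_minus[of "of_real _"] by (simp only: right_diff_distrib)
  also have "(deriv ^^ Suc l) Z 1 = (-1) ^ Suc l * fact (Suc l) * (mod_stieltjes l q / fact l)"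
    using higher_deriv_gbinomial_zetaE[OF q, of 1 l]
    unfolding Z_def stirling_zetaE_sum_1 mod_stieltjes_eq_zetaE_deriv[OF q] by (simp del: fact_Suc)
  also have "1 / 2 * ((-1) ^ Suc l * D) - (-1) ^ Suc l * fact (Suc l) * (mod_stieltjes l q / fact l)
               = (-1) ^ Suc l * fact (Suc l) * (D / (2 * fact (Suc l)) - mod_stieltjes l q / fact l)"
    by (simp add: field_simps del: fact_Suc power_Suc)
  also have "D / (2 * fact (Suc l)) = complex_of_real ((ln \<alpha> ^ (l + 1) - ln \<beta> ^ (l + 1)) / (2 * fact (Suc l)))"
    by (simp add: D_def del: fact_Suc power_Suc)
  finally show ?thesis
    unfolding P_def .
qed

lemma mod_stieltjes_by_gbinomial_series:
  fixes w :: "nat \<Rightarrow> complex" and \<alpha> \<beta> :: real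
  assumes q: "q \<ge> 1" and r: "0 < r" "r \<le> 1/2" and a: "0 \<le> a" "(1 + r) * a < q"
    and w: "\<And>k. norm (w k) \<le> C * a ^ k" and \<alpha>\<beta>: "\<alpha> > 0" "\<beta> > 0"
    and expansion: "\<And>s. s \<in> ball 1 r \<Longrightarrow>
          (\<lambda>k. w k * ((1 - s) gchoose (k + 2)) * zetaE (s + of_nat (k + 1)) q)
            sums ((complex_of_real \<alpha> powr (1 - s) - complex_of_real \<beta> powr (1 - s)) / 2
                  - (1 - s) * zetaE s q)"
  shows "\<exists>S. (\<lambda>k. w k / fact (k + 2) * stirling_zetaE_sum l q (k + 2)) sums S
             \<and> mod_stieltjes l q = complex_of_real ((ln \<alpha> ^ (l + 1) - ln \<beta> ^ (l + 1)) / (2 * (real l + 1)))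
                                    - fact l * S"
proof -
  define g where "g = (\<lambda>k s. w k * ((1 - s) gchoose (k + 2)) * zetaE (s + of_nat (k + 1)) q)"
  define H where "H = (\<lambda>s. (complex_of_real \<alpha> powr (1 - s) - complex_of_real \<beta> powr (1 - s)) / 2
                            - (1 - s) * zetaE s q)"
  define c :: complex where "c = (-1) ^ Suc l * fact (Suc l)"
  define E where "E = complex_of_real ((ln \<alpha> ^ (l + 1) - ln \<beta> ^ (l + 1)) / (2 * fact (Suc l)))"
  have q0: "q > 0"
    using q by simp
  have H: "H holomorphic_on A" for A
    unfolding H_def by (intro holomorphic_intros holomorphic_zetaE q0) auto
  have "(\<lambda>k. (deriv ^^ Suc l) (g k) 1) sums (deriv ^^ Suc l) (\<lambda>s. \<Sum>k. g k s) 1"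
    unfolding g_def by (rule higher_deriv_gbinomial_zetaE_series[OF q r w a])
  also have "(deriv ^^ Suc l) (\<lambda>s. \<Sum>k. g k s) 1 = (deriv ^^ Suc l) H 1"
  proof (rule higher_deriv_transform_within_open)
    have "(\<Sum>k. g k s) = H s" if "s \<in> ball 1 r" for s
      using sums_unique[OF expansion[OF that]] by (simp add: g_def H_def)
    then show "(\<lambda>s. \<Sum>k. g k s) holomorphic_on ball 1 r" "\<And>s. s \<in> ball 1 r \<Longrightarrow> (\<Sum>k. g k s) = H s"
      by (auto intro: holomorphic_transform[OF H])
  qed (use H r in auto)
  also have "(deriv ^^ Suc l) H 1 = c * (E - mod_stieltjes l q / fact l)"
    unfolding H_def c_def E_def by (rule higher_deriv_powr_diff_minus_zetaE[OF q0 \<alpha>\<beta>])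
  finally have series: "(\<lambda>k. (deriv ^^ Suc l) (g k) 1) sums (c * (E - mod_stieltjes l q / fact l))" .
  have g_deriv: "(deriv ^^ Suc l) (g k) 1 = c * (w k / fact (k + 2) * stirling_zetaE_sum l q (k + 2))" for k
    unfolding g_def c_def by (rule higher_deriv_gbinomial_zetaE_term[OF q0])
  have "c \<noteq> 0"
    by (simp add: c_def del: fact_Suc)
  from series[unfolded g_deriv]
  have "(\<lambda>k. w k / fact (k + 2) * stirling_zetaE_sum l q (k + 2)) sums (E - mod_stieltjes l q / fact l)"
    by (simp only: sums_mult_iff[OF \<open>c \<noteq> 0\<close>])
  moreover have "fact l * E = complex_of_real ((ln \<alpha> ^ (l + 1) - ln \<beta> ^ (l + 1)) / (2 * (real l + 1)))"
  proof -
    have "fact l * (x / (2 * fact (Suc l))) = x / (2 * (real l + 1))" for x :: real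
      by (simp add: divide_simps del: of_nat_Suc) (simp add: algebra_simps)
    then show ?thesis
      unfolding E_def by (metis of_real_fact of_real_mult)
  qed
  ultimately show ?thesis
    by (intro exI[of _ "E - mod_stieltjes l q / fact l"]) (simp add: right_diff_distrib)
qed

lemma mod_stieltjes_series_pow2:
  assumes q: "q > 2"
  shows "\<exists>S. (\<lambda>k. (-1) ^ Suc k * 2 ^ Suc k / fact (k + 2) * stirling_zetaE_sum l q (k + 2)) sums S
             \<and> mod_stieltjes l q
                 = complex_of_real ((ln (q - 1) ^ (l + 1) - ln (q - 2) ^ (l + 1)) / (2 * (real l + 1)))
                   - fact l * S"
proof (rule mod_stieltjes_by_gbinomial_series[where a = 2 and C = 2])
  define r where "r = min (1/2) ((q - 2) / 4)"
  show r: "r > 0" "r \<le> 1/2" "(1 + r) * 2 < q"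
    using q by (auto simp: r_def min_def field_simps)
  fix s :: complex assume "s \<in> ball 1 r"
  then have "norm (1 - s) < r" "Re s > 0"
    using r abs_Re_le_cmod[of "1 - s"] by (auto simp: dist_norm)
  then show "(\<lambda>k. (-1) ^ Suc k * 2 ^ Suc k * ((1 - s) gchoose (k + 2)) * zetaE (s + of_nat (k + 1)) q)
               sums ((complex_of_real (q - 1) powr (1 - s) - complex_of_real (q - 2) powr (1 - s)) / 2
                     - (1 - s) * zetaE s q)"
    using r q by (intro sums_zetaE_gbinomial_pow2) auto
qed (use q in \<open>auto simp: norm_mult norm_power\<close>)

lemma mod_stieltjes_series_odd:
  assumes q: "q > 1"
  shows "\<exists>S. (\<lambda>k. 1 / fact (2 * Suc k + 1) * stirling_zetaE_sum l q (2 * Suc k + 1)) sums S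
             \<and> mod_stieltjes l q
                 = complex_of_real ((ln q ^ (l + 1) - ln (q - 1) ^ (l + 1)) / (2 * (real l + 1)))
                   - fact l * S"
proof -
  define r where "r = min (1/2) ((q - 1) / 2)"
  have r: "r > 0" "r \<le> 1/2" "(1 + r) * 1 < q"
    using q by (auto simp: r_def min_def field_simps)
  have "\<exists>S. (\<lambda>k. of_bool (odd k) / fact (k + 2) * stirling_zetaE_sum l q (k + 2)) sums S
          \<and> mod_stieltjes l q
              = complex_of_real ((ln q ^ (l + 1) - ln (q - 1) ^ (l + 1)) / (2 * (real l + 1))) - fact l * S"
  proof (rule mod_stieltjes_by_gbinomial_series[where a = 1 and C = 1 and r = r])
    fix s :: complex assume "s \<in> ball 1 r"
    then have "norm (1 - s) < r" "Re s > 0"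
      using r abs_Re_le_cmod[of "1 - s"] by (auto simp: dist_norm)
    then show "(\<lambda>k. of_bool (odd k) * ((1 - s) gchoose (k + 2)) * zetaE (s + of_nat (k + 1)) q)
                 sums ((complex_of_real q powr (1 - s) - complex_of_real (q - 1) powr (1 - s)) / 2
                       - (1 - s) * zetaE s q)"
      using r q by (intro sums_zetaE_gbinomial_odd) auto
  qed (use q r in auto)
  moreover have "(\<lambda>k. of_bool (odd k) / fact (k + 2) * stirling_zetaE_sum l q (k + 2)) sums S
      \<longleftrightarrow> (\<lambda>i. of_bool (odd (2 * i + 1)) / fact (2 * i + 1 + 2) * stirling_zetaE_sum l q (2 * i + 1 + 2))
            sums S" for S
    by (rule sums_mono_reindex[symmetric]) (auto simp: strict_mono_def elim!: oddE)
  moreover have "2 * i + 1 + 2 = 2 * Suc i + 1" for i :: nat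
    by simp
  ultimately show ?thesis
    by simp
qed

theorem theorem3p19:
  fixes l :: nat
  shows "(\<forall>q::real. q > 2 \<longrightarrow>
            (\<exists>S. (\<lambda>k. (-1) ^ (Suc k) * 2 ^ (Suc k) / fact (Suc k + 1) *
                    (\<Sum>j\<le>l. (-1) ^ j / fact j * of_int (stirling1s (Suc k + 1) (l - j + 1))
                        * zetaE_deriv j (of_nat (Suc k + 1)) q)) sums S
               \<and> mod_stieltjes l q =
                   complex_of_real ((ln (q - 1) ^ (l + 1) - ln (q - 2) ^ (l + 1)) / (2 * (real l + 1)))
                   - fact l * S))
       \<and> (\<forall>q::real. q > 1 \<longrightarrow>
            (\<exists>S. (\<lambda>k. 1 / fact (2 * Suc k + 1) *
                    (\<Sum>j\<le>l. (-1) ^ j / fact j * of_int (stirling1s (2 * Suc k + 1) (l - j + 1))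
                        * zetaE_deriv j (of_nat (2 * Suc k + 1)) q)) sums S
               \<and> mod_stieltjes l q =
                   complex_of_real ((ln q ^ (l + 1) - ln (q - 1) ^ (l + 1)) / (2 * (real l + 1)))
                   - fact l * S))"
  apply (intro conjI allI impI)
  subgoal for q
    using mod_stieltjes_series_pow2[of q l] by (simp add: stirling_zetaE_sum_def)
  subgoal for q
    using mod_stieltjes_series_odd[of q l] by (simp add: stirling_zetaE_sum_def)
  done

end
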